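(* Let $M$ be a $4$-dimensional manifold with local coordinates $(x^1,\dots,x^4)$, $e_i=\partial/\partial x^i$, and Riemannian metric $g$ with components \[(g_{ij})=\begin{pmatrix} A&B&C&B\\ B&A&B&C\\ C&B&A&B\\ B&C&B&A\end{pmatrix},\] $A,B,C$ smooth functions with $A>C>B>0$. Let $P$ be the almost product structure with component matrix having rows $(0,0,1,0),(0,0,0,1),(1,0,0,0),(0,1,0,0)$. Then $(M,g,P)$ belongs to the class $\overline{\mathcal{W}}_6$ if and only if \[A_4-C_2=A_2-C_4,\quad B_4=B_2,\quad A_3-C_1=A_1-C_3,\quad B_3=B_1,\] where $A_i=\partial A/\partial x^i$, $B_i=\partial B/\partial x^i$, $C_i=\partial C/\partial x^i$.
   Context: Let $\nabla$ be the Levi-Civita connection of $g$, $F(x,y,z)=g((\nabla_xP)y,z)$, and $\theta(x)=g^{ij}F(e_i,e_j,x)$ with $(g^{ij})$ the inverse of $(g_{ij})$. The manifold $(M,g,P)$ belongs to the class $\overline{\mathcal{W}}_6$ (a basic class of Naveira's classification) if for all vector fields $x,y,z$: \[F(x,y,z)=\tfrac14\Big[\big(g(x,y)-g(x,Py)\big)\theta(z)+\big(g(x,z)-g(x,Pz)\big)\theta(y)\Big],\qquad \theta(Pz)=\theta(z).\] *)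

theory Defs
  imports "HOL-Analysis.Analysis"
begin

text \<open>Points of the coordinate domain are points of real^4; the coordinate index type is 4,
  the numerals 1,2,3,4 of this type index the coordinates x^1,...,x^4 (e_i = axis i 1).\<close>

definition partial :: "4 \<Rightarrow> (real^4 \<Rightarrow> real) \<Rightarrow> real^4 \<Rightarrow> real" where
  "partial j f p = deriv (\<lambda>t. f (p + t *\<^sub>R axis j 1)) 0"

fun iter_partial :: "4 list \<Rightarrow> (real^4 \<Rightarrow> real) \<Rightarrow> real^4 \<Rightarrow> real" where
  "iter_partial [] f = f"
| "iter_partial (j # js) f = partial j (iter_partial js f)"

definition smooth_on :: "(real^4) set \<Rightarrow> (real^4 \<Rightarrow> real) \<Rightarrow> bool" where
  "smooth_on U f \<longleftrightarrow>
     (\<forall>js. continuous_on U (iter_partial js f) \<and>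
        (\<forall>j. \<forall>p\<in>U. (\<lambda>t. iter_partial js f (p + t *\<^sub>R axis j 1)) differentiable (at 0)))"

definition gmat :: "(real^4 \<Rightarrow> real) \<Rightarrow> (real^4 \<Rightarrow> real) \<Rightarrow> (real^4 \<Rightarrow> real) \<Rightarrow> real^4 \<Rightarrow> real^4^4" where
  "gmat A B C p = vector [vector [A p, B p, C p, B p],
                          vector [B p, A p, B p, C p],
                          vector [C p, B p, A p, B p],
                          vector [B p, C p, B p, A p]]"

definition ginv :: "(real^4 \<Rightarrow> real) \<Rightarrow> (real^4 \<Rightarrow> real) \<Rightarrow> (real^4 \<Rightarrow> real) \<Rightarrow> real^4 \<Rightarrow> real^4^4" where
  "ginv A B C p = matrix_inv (gmat A B C p)"

text \<open>Component matrix of P: Pmat $ k $ j = P^k_j, i.e. P e_j = sum_k P^k_j e_k.\<close>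
definition Pmat :: "real^4^4" where
  "Pmat = vector [vector [0, 0, 1, 0],
                  vector [0, 0, 0, 1],
                  vector [1, 0, 0, 0],
                  vector [0, 1, 0, 0]]"

text \<open>Christoffel symbols of the second kind of the Levi-Civita connection:
  nabla_{e_i} e_j = sum_k Gamma^k_ij e_k.\<close>
definition Gamma :: "(real^4 \<Rightarrow> real) \<Rightarrow> (real^4 \<Rightarrow> real) \<Rightarrow> (real^4 \<Rightarrow> real) \<Rightarrow> real^4 \<Rightarrow> 4 \<Rightarrow> 4 \<Rightarrow> 4 \<Rightarrow> real" where
  "Gamma A B C p k i j =
     (\<Sum>l\<in>UNIV. ginv A B C p $ k $ l *
        (partial i (\<lambda>q. gmat A B C q $ j $ l) p
         + partial j (\<lambda>q. gmat A B C q $ i $ l) p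
         - partial l (\<lambda>q. gmat A B C q $ i $ j) p) / 2)"

text \<open>Components of nabla P: ((nabla_{e_i} P) e_j)^k
  = nabla_{e_i}(P e_j) - P(nabla_{e_i} e_j)   (P has constant components).\<close>
definition nablaP :: "(real^4 \<Rightarrow> real) \<Rightarrow> (real^4 \<Rightarrow> real) \<Rightarrow> (real^4 \<Rightarrow> real) \<Rightarrow> real^4 \<Rightarrow> 4 \<Rightarrow> 4 \<Rightarrow> 4 \<Rightarrow> real" where
  "nablaP A B C p i j k =
     (\<Sum>m\<in>UNIV. Gamma A B C p k i m * Pmat $ m $ j) - (\<Sum>m\<in>UNIV. Pmat $ k $ m * Gamma A B C p m i j)"

definition gmetric :: "(real^4 \<Rightarrow> real) \<Rightarrow> (real^4 \<Rightarrow> real) \<Rightarrow> (real^4 \<Rightarrow> real) \<Rightarrow> real^4 \<Rightarrow> real^4 \<Rightarrow> real^4 \<Rightarrow> real" where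
  "gmetric A B C p x y = (\<Sum>i\<in>UNIV. \<Sum>j\<in>UNIV. gmat A B C p $ i $ j * x $ i * y $ j)"

definition Pv :: "real^4 \<Rightarrow> real^4" where
  "Pv x = Pmat *v x"

definition Ften :: "(real^4 \<Rightarrow> real) \<Rightarrow> (real^4 \<Rightarrow> real) \<Rightarrow> (real^4 \<Rightarrow> real) \<Rightarrow> real^4 \<Rightarrow> real^4 \<Rightarrow> real^4 \<Rightarrow> real^4 \<Rightarrow> real" where
  "Ften A B C p x y z =
     gmetric A B C p (\<chi> l. \<Sum>i\<in>UNIV. \<Sum>j\<in>UNIV. x $ i * y $ j * nablaP A B C p i j l) z"

definition theta :: "(real^4 \<Rightarrow> real) \<Rightarrow> (real^4 \<Rightarrow> real) \<Rightarrow> (real^4 \<Rightarrow> real) \<Rightarrow> real^4 \<Rightarrow> real^4 \<Rightarrow> real" where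
  "theta A B C p x =
     (\<Sum>i\<in>UNIV. \<Sum>j\<in>UNIV. ginv A B C p $ i $ j * Ften A B C p (axis i 1) (axis j 1) x)"

text \<open>(M,g,P) in class W6-bar, with M the open coordinate domain U.\<close>
definition in_W6 :: "(real^4) set \<Rightarrow> (real^4 \<Rightarrow> real) \<Rightarrow> (real^4 \<Rightarrow> real) \<Rightarrow> (real^4 \<Rightarrow> real) \<Rightarrow> bool" where
  "in_W6 U A B C \<longleftrightarrow>
     (\<forall>p\<in>U. \<forall>x y z.
        Ften A B C p x y z =
          1/4 * ((gmetric A B C p x y - gmetric A B C p x (Pv y)) * theta A B C p z
               + (gmetric A B C p x z - gmetric A B C p x (Pv z)) * theta A B C p y)
        \<and> theta A B C p (Pv z) = theta A B C p z)"

end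

theory Submission
  imports Defs
begin

text \<open>The metric matrix is the symmetric circulant matrix with first row (A, B, C, B), and so is
  the matrix of P. Circulant matrices commute and are simultaneously diagonalised by the discrete
  Fourier basis, so g commutes with P and its inverse is the circulant matrix with the reciprocal
  eigenvalues 1/(A+2B+C), 1/(A-C), 1/(A-2B+C). Lowering the last index of nabla P with g and
  using gP = Pg, the components F(e_i,e_j,e_l) become Christoffel symbols of the first kind, i.e.
  linear combinations of first derivatives of A, B, C; the inverse metric enters only through
  theta. Testing the defining identity of the class on basis vectors gives B_3 = B_1 and
  B_4 = B_2, and then theta(Pe_1) = theta(e_1), theta(Pe_2) = theta(e_2) give the remaining two
  equations, because their coefficient 1/(A+2B+C) + 1/(A-2B+C) is positive. Conversely, under the
  four equations F(x,y,z) = (S(x,y) t(z) + S(x,z) t(y))/2 with S the matrix of I - P and t a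
  P-invariant covector, and theta = 2 t/(A-C), which is the defining identity of the class.\<close>

lemma vector4_nth [simp]:
  "vector [x, y, z, w] $ (1::4) = x" "vector [x, y, z, w] $ (2::4) = y"
  "vector [x, y, z, w] $ (3::4) = z" "vector [x, y, z, w] $ (4::4) = (w::'a::zero)"
  unfolding vector_def by simp_all

lemma matrix_inv_unique:
  fixes M N :: "'a::semiring_1^'n^'n"
  assumes "M ** N = mat 1" "N ** M = mat 1"
  shows "matrix_inv M = N"
proof -
  let ?N = "matrix_inv M"
  have "M ** ?N = mat 1 \<and> ?N ** M = mat 1"
    unfolding matrix_inv_def by (rule someI[of _ N]) (use assms in auto)
  then have "?N = ?N ** (M ** N)" "?N ** M = mat 1" using assms by auto
  then show ?thesis by (simp add: matrix_mul_assoc)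
qed

lemma matrix_diff_ldistrib:
  fixes A :: "'a::ring_1^'n^'m"
  shows "A ** (B - C) = A ** B - A ** C"
  by (simp add: matrix_matrix_mult_def vec_eq_iff sum_subtractf right_diff_distrib)

lemma sum_symmetric_bilinear_swap:
  assumes "\<And>a b. g a b = g b a"
  shows "(\<Sum>a\<in>A. \<Sum>b\<in>B. g a b * v a * z b) = (\<Sum>b\<in>B. z b * (\<Sum>a\<in>A. g b a * (v a :: real)))"
  by (simp add: sum_distrib_left mult_ac sum.swap[of _ A B] assms)

lemma sum_mult_double_sum_swap:
  "(\<Sum>a\<in>A. f a * (\<Sum>i\<in>I. \<Sum>j\<in>J. h i j * n i j a))
     = (\<Sum>i\<in>I. \<Sum>j\<in>J. h i j * (\<Sum>a\<in>A. f a * (n i j a :: real)))"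
proof -
  have "(\<Sum>a\<in>A. f a * (\<Sum>i\<in>I. \<Sum>j\<in>J. h i j * n i j a))
      = (\<Sum>a\<in>A. \<Sum>i\<in>I. \<Sum>j\<in>J. f a * (h i j * n i j a))"
    by (simp add: sum_distrib_left)
  also have "\<dots> = (\<Sum>i\<in>I. \<Sum>j\<in>J. \<Sum>a\<in>A. f a * (h i j * n i j a))"
    by (simp add: sum.swap[of _ A I] sum.swap[of _ A J])
  also have "\<dots> = (\<Sum>i\<in>I. \<Sum>j\<in>J. h i j * (\<Sum>a\<in>A. f a * n i j a))"
    by (simp add: sum_distrib_left mult_ac)
  finally show ?thesis .
qed

lemma sum_symmetrized_product:
  fixes s :: "4 \<Rightarrow> 4 \<Rightarrow> real" and t :: "4 \<Rightarrow> real"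
  shows "(\<Sum>l\<in>UNIV. z $ l * (\<Sum>i\<in>UNIV. \<Sum>j\<in>UNIV. x $ i * y $ j * ((s i j * t l + s i l * t j) / 2)))
    = ((\<Sum>i\<in>UNIV. \<Sum>j\<in>UNIV. x $ i * y $ j * s i j) * (\<Sum>l\<in>UNIV. z $ l * t l)
       + (\<Sum>i\<in>UNIV. \<Sum>j\<in>UNIV. x $ i * z $ j * s i j) * (\<Sum>l\<in>UNIV. y $ l * t l)) / 2"
  by (simp add: sum_4 algebra_simps add_divide_distrib)

type_synonym scalar_field = "real^4 \<Rightarrow> real"

definition circulant4 :: "real \<Rightarrow> real \<Rightarrow> real \<Rightarrow> real^4^4" where
  "circulant4 a b c = vector [vector [a, b, c, b], vector [b, a, b, c],
                              vector [c, b, a, b], vector [b, c, b, a]]"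

text \<open>The circulant matrix with eigenvalue l0 on (1,1,1,1), l2 on (1,-1,1,-1) and l1 on the
  span of (1,0,-1,0) and (0,1,0,-1).\<close>

definition circulant4_spectral :: "real \<Rightarrow> real \<Rightarrow> real \<Rightarrow> real^4^4" where
  "circulant4_spectral l0 l1 l2 =
     circulant4 ((l0 + 2 * l1 + l2) / 4) ((l0 - l2) / 4) ((l0 - 2 * l1 + l2) / 4)"

lemma circulant4_eq_spectral:
  "circulant4 a b c = circulant4_spectral (a + 2 * b + c) (a - c) (a - 2 * b + c)"
  by (simp add: circulant4_spectral_def)

lemma circulant4_spectral_mult:
  "circulant4_spectral l0 l1 l2 ** circulant4_spectral m0 m1 m2
     = circulant4_spectral (l0 * m0) (l1 * m1) (l2 * m2)"
  by (simp add: circulant4_spectral_def circulant4_def vec_eq_iff forall_4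
      matrix_matrix_mult_def sum_4 field_simps)

lemma circulant4_spectral_one: "circulant4_spectral 1 1 1 = mat 1"
  by (simp add: circulant4_spectral_def circulant4_def vec_eq_iff forall_4 mat_def)

lemma circulant4_mult_commute:
  "circulant4 a b c ** circulant4 a' b' c' = circulant4 a' b' c' ** circulant4 a b c"
  by (simp add: circulant4_eq_spectral circulant4_spectral_mult mult.commute)

lemma matrix_inv_circulant4_spectral:
  assumes "l0 \<noteq> 0" "l1 \<noteq> 0" "l2 \<noteq> 0"
  shows "matrix_inv (circulant4_spectral l0 l1 l2) = circulant4_spectral (1 / l0) (1 / l1) (1 / l2)"
  by (rule matrix_inv_unique) (simp_all add: circulant4_spectral_mult circulant4_spectral_one assms)

lemma gmat_eq_circulant4: "gmat A B C p = circulant4 (A p) (B p) (C p)"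
  by (simp add: gmat_def circulant4_def)

lemma Pmat_eq_circulant4: "Pmat = circulant4 0 0 1"
  by (simp add: Pmat_def circulant4_def)

lemma gmat_Pmat_commute: "gmat A B C p ** Pmat = Pmat ** gmat A B C p"
  by (simp add: gmat_eq_circulant4 Pmat_eq_circulant4 circulant4_mult_commute)

lemma gmat_sym: "gmat A B C p $ k $ l = gmat A B C p $ l $ k"
  using exhaust_4[of k] exhaust_4[of l] by (auto simp: gmat_def)

lemma ginv_eq_circulant4_spectral:
  assumes "A p > C p" "C p > B p" "B p > 0"
  shows "ginv A B C p = circulant4_spectral
           (1 / (A p + 2 * B p + C p)) (1 / (A p - C p)) (1 / (A p - 2 * B p + C p))"
  unfolding ginv_def gmat_eq_circulant4 circulant4_eq_spectral
  using assms by (intro matrix_inv_circulant4_spectral) auto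

lemma gmat_ginv:
  assumes "A p > C p" "C p > B p" "B p > 0"
  shows "gmat A B C p ** ginv A B C p = mat 1"
proof -
  have "ginv A B C p = circulant4_spectral
          (1 / (A p + 2 * B p + C p)) (1 / (A p - C p)) (1 / (A p - 2 * B p + C p))"
    using assms by (rule ginv_eq_circulant4_spectral)
  with assms show ?thesis
    by (simp add: gmat_eq_circulant4 circulant4_eq_spectral circulant4_spectral_mult
        flip: circulant4_spectral_one)
qed

text \<open>Christoffel symbols of the first kind: christoffel1 A B C p i $ l $ j = g(nabla_{e_i} e_j, e_l).
  Putting the lowered index first makes it the product of gmat with christoffel2 (the matrix of
  nabla_{e_i}).\<close>

definition christoffel1 ::
    "scalar_field \<Rightarrow> scalar_field \<Rightarrow> scalar_field \<Rightarrow> real^4 \<Rightarrow> 4 \<Rightarrow> real^4^4" where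
  "christoffel1 A B C p i = (\<chi> l j.
     (partial i (\<lambda>q. gmat A B C q $ j $ l) p + partial j (\<lambda>q. gmat A B C q $ i $ l) p
      - partial l (\<lambda>q. gmat A B C q $ i $ j) p) / 2)"

definition christoffel2 ::
    "scalar_field \<Rightarrow> scalar_field \<Rightarrow> scalar_field \<Rightarrow> real^4 \<Rightarrow> 4 \<Rightarrow> real^4^4" where
  "christoffel2 A B C p i = (\<chi> k j. Gamma A B C p k i j)"

lemma christoffel2_eq: "christoffel2 A B C p i = ginv A B C p ** christoffel1 A B C p i"
  by (simp add: christoffel2_def christoffel1_def Gamma_def matrix_matrix_mult_def vec_eq_iff)

lemma gmat_christoffel2:
  assumes "gmat A B C p ** ginv A B C p = mat 1"
  shows "gmat A B C p ** christoffel2 A B C p i = christoffel1 A B C p i"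
  by (simp add: christoffel2_eq matrix_mul_assoc assms)

lemma nablaP_eq:
  "nablaP A B C p i j k = (christoffel2 A B C p i ** Pmat - Pmat ** christoffel2 A B C p i) $ k $ j"
  by (simp add: nablaP_def christoffel2_def matrix_matrix_mult_def)

definition Fcomp ::
    "scalar_field \<Rightarrow> scalar_field \<Rightarrow> scalar_field \<Rightarrow> real^4 \<Rightarrow> 4 \<Rightarrow> 4 \<Rightarrow> 4 \<Rightarrow> real" where
  "Fcomp A B C p i j l = (christoffel1 A B C p i ** Pmat - Pmat ** christoffel1 A B C p i) $ l $ j"

lemma gmat_nablaP:
  assumes "gmat A B C p ** ginv A B C p = mat 1"
  shows "(\<Sum>k\<in>UNIV. gmat A B C p $ l $ k * nablaP A B C p i j k) = Fcomp A B C p i j l"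
proof -
  let ?g = "gmat A B C p" and ?\<Gamma> = "christoffel2 A B C p i"
  have "?g ** (Pmat ** ?\<Gamma>) = Pmat ** (?g ** ?\<Gamma>)"
    by (metis matrix_mul_assoc gmat_Pmat_commute)
  then have "?g ** (?\<Gamma> ** Pmat - Pmat ** ?\<Gamma>) = (?g ** ?\<Gamma>) ** Pmat - Pmat ** (?g ** ?\<Gamma>)"
    by (simp add: matrix_diff_ldistrib matrix_mul_assoc)
  also have "\<dots> = christoffel1 A B C p i ** Pmat - Pmat ** christoffel1 A B C p i"
    by (simp add: gmat_christoffel2 assms)
  finally have "(?g ** (?\<Gamma> ** Pmat - Pmat ** ?\<Gamma>)) $ l $ j = Fcomp A B C p i j l"
    by (simp add: Fcomp_def)
  then show ?thesis
    by (simp add: nablaP_eq matrix_matrix_mult_def)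
qed

lemma Ften_eq_sum:
  assumes "gmat A B C p ** ginv A B C p = mat 1"
  shows "Ften A B C p x y z
    = (\<Sum>l\<in>UNIV. z $ l * (\<Sum>i\<in>UNIV. \<Sum>j\<in>UNIV. x $ i * y $ j * Fcomp A B C p i j l))"
proof -
  have "Ften A B C p x y z = (\<Sum>l\<in>UNIV. z $ l * (\<Sum>k\<in>UNIV. gmat A B C p $ l $ k *
          (\<Sum>i\<in>UNIV. \<Sum>j\<in>UNIV. x $ i * y $ j * nablaP A B C p i j k)))"
    unfolding Ften_def gmetric_def vec_lambda_beta
    by (rule sum_symmetric_bilinear_swap) (rule gmat_sym)
  then show ?thesis
    by (simp only: sum_mult_double_sum_swap gmat_nablaP assms)
qed

lemma Ften_axis:
  assumes "gmat A B C p ** ginv A B C p = mat 1"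
  shows "Ften A B C p (axis i 1) (axis j 1) z = (\<Sum>l\<in>UNIV. z $ l * Fcomp A B C p i j l)"
  by (simp add: Ften_eq_sum[OF assms] axis_def of_bool_def[symmetric] mult.assoc
      flip: sum_distrib_left)

lemma Ften_axes:
  assumes "gmat A B C p ** ginv A B C p = mat 1"
  shows "Ften A B C p (axis i 1) (axis j 1) (axis l 1) = Fcomp A B C p i j l"
  unfolding Ften_axis[OF assms] by (simp add: axis_def of_bool_def[symmetric])

lemma theta_eq_sum:
  assumes "gmat A B C p ** ginv A B C p = mat 1"
  shows "theta A B C p z
    = (\<Sum>l\<in>UNIV. z $ l * (\<Sum>i\<in>UNIV. \<Sum>j\<in>UNIV. ginv A B C p $ i $ j * Fcomp A B C p i j l))"
  unfolding theta_def Ften_axis[OF assms] by (rule sum_mult_double_sum_swap[symmetric])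

lemma theta_eq_circulant4:
  assumes "gmat A B C p ** ginv A B C p = mat 1" and "ginv A B C p = circulant4 a b c"
  shows "theta A B C p z =
      z$1 * (2 * a * (partial 3 A p - partial 1 C p) - 2 * c * (partial 1 A p - partial 3 C p)
             + 4 * b * (partial 3 B p - partial 1 B p))
    + z$2 * (2 * a * (partial 4 A p - partial 2 C p) - 2 * c * (partial 2 A p - partial 4 C p)
             + 4 * b * (partial 4 B p - partial 2 B p))
    + z$3 * (2 * a * (partial 1 A p - partial 3 C p) - 2 * c * (partial 3 A p - partial 1 C p)
             - 4 * b * (partial 3 B p - partial 1 B p))
    + z$4 * (2 * a * (partial 2 A p - partial 4 C p) - 2 * c * (partial 4 A p - partial 2 C p)
             - 4 * b * (partial 4 B p - partial 2 B p))"
  unfolding theta_eq_sum[OF assms(1)] assms(2)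
  by (simp add: sum_4 circulant4_def Fcomp_def christoffel1_def Pmat_def gmat_def
      matrix_matrix_mult_def field_simps)

lemma Fcomp_factorization:
  assumes "partial 1 A p = partial 3 A p - partial 1 C p + partial 3 C p"
    and "partial 2 A p = partial 4 A p - partial 2 C p + partial 4 C p"
    and "partial 3 B p = partial 1 B p" and "partial 4 B p = partial 2 B p"
  defines "t \<equiv> vector [partial 3 A p - partial 1 C p, partial 4 A p - partial 2 C p,
                        partial 3 A p - partial 1 C p, partial 4 A p - partial 2 C p] :: real^4"
  shows "Fcomp A B C p i j l
    = (circulant4 1 0 (-1) $ i $ j * t $ l + circulant4 1 0 (-1) $ i $ l * t $ j) / 2"
proof -
  have "\<forall>i j l. Fcomp A B C p i j l
    = (circulant4 1 0 (-1) $ i $ j * t $ l + circulant4 1 0 (-1) $ i $ l * t $ j) / 2"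
    unfolding forall_4 t_def
    by (simp add: Fcomp_def christoffel1_def matrix_matrix_mult_def sum_4 Pmat_def gmat_def
        circulant4_def assms field_simps)
  then show ?thesis by blast
qed

lemma theta_explicit:
  assumes "A p > C p" "C p > B p" "B p > 0"
  defines "u \<equiv> 1 / (A p + 2 * B p + C p)" and "v \<equiv> 1 / (A p - 2 * B p + C p)"
    and "w \<equiv> 1 / (A p - C p)"
  shows "theta A B C p z =
      (z$1 - z$3) * ((u + v) / 2 * ((partial 3 A p - partial 1 C p) - (partial 1 A p - partial 3 C p))
                     + (u - v) * (partial 3 B p - partial 1 B p))
    + (z$1 + z$3) * w * ((partial 3 A p - partial 1 C p) + (partial 1 A p - partial 3 C p))
    + (z$2 - z$4) * ((u + v) / 2 * ((partial 4 A p - partial 2 C p) - (partial 2 A p - partial 4 C p))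
                     + (u - v) * (partial 4 B p - partial 2 B p))
    + (z$2 + z$4) * w * ((partial 4 A p - partial 2 C p) + (partial 2 A p - partial 4 C p))"
proof -
  have inv: "gmat A B C p ** ginv A B C p = mat 1"
    using assms(1-3) by (rule gmat_ginv)
  have "ginv A B C p = circulant4_spectral u w v"
    unfolding u_def v_def w_def using assms(1-3) by (rule ginv_eq_circulant4_spectral)
  then have "ginv A B C p = circulant4 ((u + 2 * w + v) / 4) ((u - v) / 4) ((u - 2 * w + v) / 4)"
    by (simp add: circulant4_spectral_def)
  then show ?thesis
    by (simp add: theta_eq_circulant4[OF inv] field_simps)
qed

definition W6_at :: "scalar_field \<Rightarrow> scalar_field \<Rightarrow> scalar_field \<Rightarrow> real^4 \<Rightarrow> bool" where
  "W6_at A B C p \<longleftrightarrow> (\<forall>x y z.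
     Ften A B C p x y z =
       1/4 * ((gmetric A B C p x y - gmetric A B C p x (Pv y)) * theta A B C p z
            + (gmetric A B C p x z - gmetric A B C p x (Pv z)) * theta A B C p y)
     \<and> theta A B C p (Pv z) = theta A B C p z)"

lemma in_W6_iff_W6_at: "in_W6 U A B C \<longleftrightarrow> (\<forall>p\<in>U. W6_at A B C p)"
  by (simp add: in_W6_def W6_at_def)

lemma Pv_nth [simp]: "Pv y $ 1 = y $ 3" "Pv y $ 2 = y $ 4" "Pv y $ 3 = y $ 1" "Pv y $ 4 = y $ 2"
  by (simp_all add: Pv_def Pmat_def matrix_vector_mult_def sum_4)

lemma gmetric_diff_Pv:
  "gmetric A B C p x y - gmetric A B C p x (Pv y)
     = (A p - C p) * (\<Sum>i\<in>UNIV. \<Sum>j\<in>UNIV. x $ i * y $ j * circulant4 1 0 (-1) $ i $ j)"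
  by (simp add: gmetric_def gmat_def circulant4_def sum_4 algebra_simps)

lemma W6_at_imp_equations:
  assumes pos: "A p > C p" "C p > B p" "B p > 0" and W6: "W6_at A B C p"
  shows "partial 4 A p - partial 2 C p = partial 2 A p - partial 4 C p
       \<and> partial 4 B p = partial 2 B p
       \<and> partial 3 A p - partial 1 C p = partial 1 A p - partial 3 C p
       \<and> partial 3 B p = partial 1 B p"
proof -
  have inv: "gmat A B C p ** ginv A B C p = mat 1"
    using pos by (rule gmat_ginv)
  note F = W6[unfolded W6_at_def, rule_format, THEN conjunct1]
    and theta_P = W6[unfolded W6_at_def, rule_format, THEN conjunct2]
  have B31: "partial 3 B p = partial 1 B p"
    using F[of "axis 2 1" "axis 1 1" "axis 1 1", unfolded Ften_axes[OF inv]]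
    by (simp add: sum_4 Fcomp_def christoffel1_def matrix_matrix_mult_def
        Pmat_def gmat_def gmetric_def axis_def)
  have B42: "partial 4 B p = partial 2 B p"
    using F[of "axis 1 1" "axis 2 1" "axis 2 1", unfolded Ften_axes[OF inv]]
    by (simp add: sum_4 Fcomp_def christoffel1_def matrix_matrix_mult_def
        Pmat_def gmat_def gmetric_def axis_def)
  define u v w where "u = 1 / (A p + 2 * B p + C p)" and "v = 1 / (A p - 2 * B p + C p)"
    and "w = 1 / (A p - C p)"
  note theta = theta_explicit[where A=A and B=B and C=C and p=p, OF pos, folded u_def v_def w_def]
  have "u + v > 0"
    using pos unfolding u_def v_def by (intro add_pos_pos) auto
  moreover have "(u + v) / 2 * ((partial 3 A p - partial 1 C p) - (partial 1 A p - partial 3 C p)) = 0"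
    using theta_P[of "axis 1 1"] B31 by (simp add: theta axis_def)
  moreover have "(u + v) / 2 * ((partial 4 A p - partial 2 C p) - (partial 2 A p - partial 4 C p)) = 0"
    using theta_P[of "axis 2 1"] B42 by (simp add: theta axis_def)
  ultimately show ?thesis using B31 B42 by simp
qed

lemma equations_imp_W6_at:
  assumes pos: "A p > C p" "C p > B p" "B p > 0"
    and eqs: "partial 4 A p - partial 2 C p = partial 2 A p - partial 4 C p"
      "partial 4 B p = partial 2 B p"
      "partial 3 A p - partial 1 C p = partial 1 A p - partial 3 C p"
      "partial 3 B p = partial 1 B p"
  shows "W6_at A B C p"
proof -
  have inv: "gmat A B C p ** ginv A B C p = mat 1"
    using pos by (rule gmat_ginv)
  define t :: "real^4"
    where "t = vector [partial 3 A p - partial 1 C p, partial 4 A p - partial 2 C p,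
                       partial 3 A p - partial 1 C p, partial 4 A p - partial 2 C p]"
  define S where "S x y = (\<Sum>i\<in>UNIV. \<Sum>j\<in>UNIV. x $ i * y $ j * circulant4 1 0 (-1) $ i $ j)"
    for x y :: "real^4"
  define T where "T z = (\<Sum>l\<in>UNIV. z $ l * t $ l)" for z :: "real^4"
  define w where "w = 1 / (A p - C p)"
  have w: "(A p - C p) * w = 1"
    using pos by (simp add: w_def)
  have A1: "partial 1 A p = partial 3 A p - partial 1 C p + partial 3 C p"
    and A2: "partial 2 A p = partial 4 A p - partial 2 C p + partial 4 C p"
    using eqs by linarith+
  have F: "Ften A B C p x y z = (S x y * T z + S x z * T y) / 2" for x y z
  proof -
    have Fcomp: "Fcomp A B C p i j l
      = (circulant4 1 0 (-1) $ i $ j * t $ l + circulant4 1 0 (-1) $ i $ l * t $ j) / 2" for i j l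
      unfolding t_def using A1 A2 eqs(4,2) by (rule Fcomp_factorization)
    show ?thesis
      unfolding Ften_eq_sum[OF inv] Fcomp S_def T_def by (rule sum_symmetrized_product)
  qed
  have theta: "theta A B C p z = 2 * w * T z" for z
    using theta_explicit[where A=A and B=B and C=C and p=p, OF pos, folded w_def]
    by (simp add: A1 A2 eqs(2,4) T_def t_def sum_4 algebra_simps)
  show ?thesis
    unfolding W6_at_def
  proof (intro allI conjI)
    fix x y z
    have "(S x y * T z + S x z * T y) / 2
        = ((A p - C p) * w) * ((S x y * T z + S x z * T y) / 2)"
      by (simp add: w)
    then show "Ften A B C p x y z =
       1/4 * ((gmetric A B C p x y - gmetric A B C p x (Pv y)) * theta A B C p z
            + (gmetric A B C p x z - gmetric A B C p x (Pv z)) * theta A B C p y)"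
      by (simp add: F theta gmetric_diff_Pv flip: S_def) (simp add: algebra_simps)
    show "theta A B C p (Pv z) = theta A B C p z"
      by (simp add: theta T_def t_def sum_4 algebra_simps)
  qed
qed

lemma W6_at_iff:
  assumes "A p > C p" "C p > B p" "B p > 0"
  shows "W6_at A B C p \<longleftrightarrow>
      partial 4 A p - partial 2 C p = partial 2 A p - partial 4 C p
    \<and> partial 4 B p = partial 2 B p
    \<and> partial 3 A p - partial 1 C p = partial 1 A p - partial 3 C p
    \<and> partial 3 B p = partial 1 B p"
  using assms W6_at_imp_equations equations_imp_W6_at by blast

text \<open>Membership in the class is a pointwise algebraic condition on first derivatives.\<close>

theorem corollary3p7:
  fixes U :: "(real^4) set" and A B C :: "real^4 \<Rightarrow> real"
  assumes "open U"
    and "smooth_on U A" and "smooth_on U B" and "smooth_on U C"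
    and "\<forall>p\<in>U. A p > C p \<and> C p > B p \<and> B p > 0"
  shows "in_W6 U A B C \<longleftrightarrow>
    (\<forall>p\<in>U. partial 4 A p - partial 2 C p = partial 2 A p - partial 4 C p
          \<and> partial 4 B p = partial 2 B p
          \<and> partial 3 A p - partial 1 C p = partial 1 A p - partial 3 C p
          \<and> partial 3 B p = partial 1 B p)"
  using assms(5) by (simp add: in_W6_iff_W6_at W6_at_iff)

end
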